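(* A set $A\subseteq2^\omega$ is $\mathcal T$-clopen (i.e. $A$ is measurable, $\Phi(A)=A$ and $\Phi(2^\omega\setminus A)=2^\omega\setminus A$) if and only if $A=\Phi(B)$ for some dualistic measurable $B$, if and only if $A\in\mathrm{ran}(\Phi)$ and $A$ is dualistic. Moreover the family of $\mathcal T$-clopen sets is a proper subfamily of $\{\Phi(B): B\text{ measurable}\}\cap\boldsymbol{\Delta}^0_2$.
   Context: $2^\omega$ is the Cantor space; $N_s=\{x:s\subset x\}$; $\mu$ the coin-tossing measure with $\mu(N_s)=2^{-\mathrm{lh}(s)}$. For measurable $A$ and $x$, $\mathcal D_A(x)=\lim_n\mu(A\cap N_{x\restriction n})/\mu(N_{x\restriction n})$ when it exists; $\Phi(A)=\{x:\mathcal D_A(x)=1\}$; $\mathrm{ran}(\Phi)=\{\Phi(B):B\text{ measurable}\}$. A measurable $B$ is dualistic if $\mathcal D_B(x)$ exists and belongs to $\{0,1\}$ for every $x$. $\boldsymbol{\Delta}^0_2$: sets both $F_\sigma$ and $G_\delta$. *)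

theory Defs
  imports "HOL-Probability.Probability"
begin

text \<open>Cantor space is modelled as the type nat \<Rightarrow> bool (with its product topology,
  the library's topology instance for function spaces).  The coin-tossing measure is the
  infinite product of fair Bernoulli measures; "measurable" means measurable for its
  completion (Lebesgue measurability).\<close>

definition coin_base :: "(nat \<Rightarrow> bool) measure" where
  "coin_base = (\<Pi>\<^sub>M i\<in>UNIV. measure_pmf (bernoulli_pmf (1/2)))"

definition mu :: "(nat \<Rightarrow> bool) measure" where
  "mu = completion coin_base"

definition cyl :: "(nat \<Rightarrow> bool) \<Rightarrow> nat \<Rightarrow> (nat \<Rightarrow> bool) set" where
  "cyl x n = {y. \<forall>i<n. y i = x i}"

definition dens_seq :: "(nat \<Rightarrow> bool) set \<Rightarrow> (nat \<Rightarrow> bool) \<Rightarrow> nat \<Rightarrow> real" where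
  "dens_seq A x n = measure mu (A \<inter> cyl x n) / measure mu (cyl x n)"

definition has_density :: "(nat \<Rightarrow> bool) set \<Rightarrow> (nat \<Rightarrow> bool) \<Rightarrow> real \<Rightarrow> bool" where
  "has_density A x d \<longleftrightarrow> dens_seq A x \<longlonglongrightarrow> d"

definition Phi :: "(nat \<Rightarrow> bool) set \<Rightarrow> (nat \<Rightarrow> bool) set" where
  "Phi A = {x. has_density A x 1}"

definition ran_Phi :: "(nat \<Rightarrow> bool) set set" where
  "ran_Phi = {Phi B | B. B \<in> sets mu}"

definition dualistic :: "(nat \<Rightarrow> bool) set \<Rightarrow> bool" where
  "dualistic B \<longleftrightarrow> B \<in> sets mu \<and> (\<forall>x. \<exists>d. has_density B x d \<and> d \<in> {0, 1})"

definition T_clopen :: "(nat \<Rightarrow> bool) set \<Rightarrow> bool" where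
  "T_clopen A \<longleftrightarrow> A \<in> sets mu \<and> Phi A = A \<and> Phi (- A) = - A"

definition Delta02 :: "(nat \<Rightarrow> bool) set \<Rightarrow> bool" where
  "Delta02 A \<longleftrightarrow> fsigma_in euclidean A \<and> gdelta_in euclidean A"

end

theory Submission
  imports Defs
begin

(* The proof rests on the Lebesgue density theorem for Cantor space: for every measurable C
   the sets Phi C - C and C - Phi C are null.  Consequently Phi C is measurable, has the same
   density sequences as C, and Phi is idempotent on measurable sets.  *)


lemma space_coin_base [simp]: "space coin_base = UNIV"
  by (simp add: coin_base_def space_PiM)

lemma space_mu [simp]: "space mu = UNIV"
  by (simp add: mu_def)

lemma prob_space_coin_base: "prob_space coin_base"
  unfolding coin_base_def by (intro prob_space_PiM prob_space_measure_pmf)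

interpretation mu: prob_space mu
  unfolding mu_def by (rule prob_space.prob_space_completion[OF prob_space_coin_base])

lemma Compl_sets_mu: "A \<in> sets mu \<Longrightarrow> - A \<in> sets mu"
  using sets.compl_sets[of A mu] by (simp add: Compl_eq_Diff_UNIV)

lemma cyl_sets_coin_base: "cyl x n \<in> sets coin_base"
proof -
  have "Measurable.pred coin_base (\<lambda>y. \<forall>i\<in>{..<n}. y i = x i)"
    unfolding coin_base_def by measurable
  then show ?thesis
    unfolding cyl_def pred_def by (simp add: lessThan_def)
qed

lemma cyl_sets [measurable]: "cyl x n \<in> sets mu"
  by (simp add: mu_def cyl_sets_coin_base)

text \<open>The cylinder of length n has measure 2^-n: it is a product of n fair coin events.\<close>
lemma cyl_measure: "measure mu (cyl x n) = (1/2) ^ n"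
proof -
  let ?coin = "measure_pmf (bernoulli_pmf (1/2))"
  have "cyl x n = prod_emb UNIV (\<lambda>_. ?coin) {..<n} (PiE {..<n} (\<lambda>i. {x i}))"
    by (auto simp: cyl_def prod_emb_def PiE_def extensional_def restrict_def)
  then have "emeasure coin_base (cyl x n) = (\<Prod>i\<in>{..<n}. emeasure ?coin {x i})"
    unfolding coin_base_def by (auto intro: emeasure_PiM_emb prob_space_measure_pmf)
  also have "\<dots> = ennreal (1/2) ^ n"
    by (simp add: emeasure_pmf_single)
  also have "\<dots> = ennreal ((1/2) ^ n)"
    by (rule ennreal_power) simp
  finally show ?thesis
    using cyl_sets_coin_base by (simp add: mu_def measure_def)
qed

lemma cyl_pos: "measure mu (cyl x n) > 0"
  by (simp add: cyl_measure)

lemma cyl_self [simp]: "x \<in> cyl x n"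
  by (simp add: cyl_def)

lemma cyl_cong: "\<forall>i<n. x i = y i \<Longrightarrow> cyl x n = cyl y n"
  by (auto simp: cyl_def)

lemma cyl_disjoint: "cyl x n \<inter> cyl y n \<noteq> {} \<Longrightarrow> cyl x n = cyl y n"
  by (auto simp: cyl_def)

lemma finite_cyls: "finite ((\<lambda>x. cyl x n) ` A)"
proof -
  have "(\<lambda>x. cyl x n) ` A \<subseteq> (\<lambda>l. {y. \<forall>i<n. y i = l ! i}) ` {xs. set xs \<subseteq> UNIV \<and> length xs = n}"
  proof
    fix c assume "c \<in> (\<lambda>x. cyl x n) ` A"
    then obtain x where "c = cyl x n"
      by auto
    then show "c \<in> (\<lambda>l. {y. \<forall>i<n. y i = l ! i}) ` {xs. set xs \<subseteq> UNIV \<and> length xs = n}"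
      by (intro image_eqI[where x="map x [0..<n]"]) (auto simp: cyl_def)
  qed
  moreover have "finite {xs. set xs \<subseteq> (UNIV :: bool set) \<and> length xs = n}"
    by (rule finite_lists_length_eq) simp
  ultimately show ?thesis
    by (meson finite_surj)
qed

lemma open_cyl: "open (cyl x n)"
proof -
  have coord: "open ((\<lambda>y :: nat \<Rightarrow> bool. y i) -` {b})" for i b
    using continuous_on_open_vimage[of UNIV "\<lambda>y :: nat \<Rightarrow> bool. y i"]
      continuous_on_product_coordinates[of i] discrete_topology_class.open_discrete[of "{b}"] by simp
  have "cyl x n = (\<Inter>i\<in>{..<n}. (\<lambda>y. y i) -` {x i})"
    by (auto simp: cyl_def)
  then show ?thesis
    by (simp add: open_INT coord)
qed


text \<open>K is determined by the first n coordinates, i.e. K is a finite union of cylinders of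
  length n.  These are exactly the clopen subsets of Cantor space.\<close>
definition fin_dep :: "nat \<Rightarrow> (nat \<Rightarrow> bool) set \<Rightarrow> bool" where
  "fin_dep n K \<longleftrightarrow> (\<forall>x y. (\<forall>i<n. x i = y i) \<longrightarrow> (x \<in> K \<longleftrightarrow> y \<in> K))"

lemma fin_dep_mono: "fin_dep n K \<Longrightarrow> n \<le> m \<Longrightarrow> fin_dep m K"
  by (auto simp: fin_dep_def)

lemma fin_dep_Compl: "fin_dep n K \<Longrightarrow> fin_dep n (- K)"
  by (auto simp: fin_dep_def)

lemma fin_dep_Un: "fin_dep n K \<Longrightarrow> fin_dep n L \<Longrightarrow> fin_dep n (K \<union> L)"
  by (auto simp: fin_dep_def)

lemma fin_dep_empty: "fin_dep n {}"
  by (simp add: fin_dep_def)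

lemma fin_dep_cyl: "fin_dep n (cyl x n)"
  by (auto simp: fin_dep_def cyl_def)

lemma fin_dep_cyl_subset: "fin_dep n K \<Longrightarrow> x \<in> K \<Longrightarrow> n \<le> m \<Longrightarrow> cyl x m \<subseteq> K"
  unfolding fin_dep_def cyl_def by (auto simp: Ball_def) (metis less_le_trans)

lemma fin_dep_eq_Union_cyl: "fin_dep n K \<Longrightarrow> K = (\<Union>x\<in>K. cyl x n)"
  using fin_dep_cyl_subset[of n K _ n] by auto

lemma fin_dep_sets: "fin_dep n K \<Longrightarrow> K \<in> sets mu"
proof -
  assume K: "fin_dep n K"
  have "(\<Union>c\<in>(\<lambda>x. cyl x n) ` K. c) \<in> sets mu"
    using finite_cyls by (intro sets.finite_UN) auto
  then show ?thesis
    using fin_dep_eq_Union_cyl[OF K] by simp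
qed

lemma fin_dep_open: "fin_dep n K \<Longrightarrow> open K"
  by (metis fin_dep_eq_Union_cyl open_UN open_cyl)

lemma fin_dep_closed: "fin_dep n K \<Longrightarrow> closed K"
  unfolding closed_def by (rule fin_dep_open[OF fin_dep_Compl])


lemma dens_seq_ge_iff:
  "d \<le> dens_seq S x n \<longleftrightarrow> d * measure mu (cyl x n) \<le> measure mu (S \<inter> cyl x n)"
  unfolding dens_seq_def by (rule pos_le_divide_eq[OF cyl_pos])

lemma dens_seq_le_1: "dens_seq S x n \<le> 1"
proof -
  have "measure mu (S \<inter> cyl x n) \<le> measure mu (cyl x n)"
    by (rule mu.finite_measure_mono_AE) auto
  then show ?thesis
    using cyl_pos[of x n] by (simp add: dens_seq_def)
qed

lemma dens_seq_Compl: "S \<in> sets mu \<Longrightarrow> dens_seq (- S) x n = 1 - dens_seq S x n"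
proof -
  assume S: "S \<in> sets mu"
  have "- S \<inter> cyl x n = cyl x n - S \<inter> cyl x n"
    by auto
  then have "measure mu (- S \<inter> cyl x n) = measure mu (cyl x n) - measure mu (S \<inter> cyl x n)"
    using S by (simp add: mu.finite_measure_Diff)
  then show ?thesis
    using cyl_pos[of x n] by (simp add: dens_seq_def field_simps)
qed

lemma dens_seq_cong:
  assumes "\<forall>i<n. x i = y i"
  shows "dens_seq S x n = dens_seq S y n"
  using cyl_cong[OF assms] by (simp add: dens_seq_def)

lemma fin_dep_dens_seq: "fin_dep n {x. P (dens_seq A x n)}"
proof (unfold fin_dep_def, intro allI impI)
  fix x y :: "nat \<Rightarrow> bool"
  assume "\<forall>i<n. x i = y i"
  then show "x \<in> {x. P (dens_seq A x n)} \<longleftrightarrow> y \<in> {x. P (dens_seq A x n)}"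
    using dens_seq_cong[of n x y A] by simp
qed

lemma dens_seq_null_cong:
  assumes "S \<in> sets mu" "T \<in> sets mu" "sym_diff S T \<in> null_sets mu"
  shows "dens_seq S = dens_seq T"
proof (intro ext)
  fix x n
  have "AE y in mu. y \<in> S \<inter> cyl x n \<longleftrightarrow> y \<in> T \<inter> cyl x n"
    by (rule AE_I'[OF assms(3)]) auto
  then have "measure mu (S \<inter> cyl x n) = measure mu (T \<inter> cyl x n)"
    using assms by (intro measure_eq_AE) auto
  then show "dens_seq S x n = dens_seq T x n"
    by (simp add: dens_seq_def)
qed

lemma has_density_fin_dep_subset:
  assumes "fin_dep n K" "x \<in> K" "K \<subseteq> S"
  shows "has_density S x 1"
proof -
  have "dens_seq S x m = 1" if "n \<le> m" for m
  proof -
    have "S \<inter> cyl x m = cyl x m"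
      using fin_dep_cyl_subset[OF assms(1,2) that] assms(3) by auto
    then show ?thesis
      using cyl_pos[of x m] by (simp add: dens_seq_def)
  qed
  then show ?thesis
    unfolding has_density_def by (intro tendsto_eventually) (auto simp: eventually_sequentially)
qed

lemma has_density_fin_dep_disjoint:
  assumes "fin_dep n K" "x \<in> K" "K \<inter> S = {}"
  shows "has_density S x 0"
proof -
  have "dens_seq S x m = 0" if "n \<le> m" for m
  proof -
    have "S \<inter> cyl x m = {}"
      using fin_dep_cyl_subset[OF assms(1,2) that] assms(3) by auto
    then show ?thesis
      by (simp add: dens_seq_def)
  qed
  then show ?thesis
    unfolding has_density_def by (intro tendsto_eventually) (auto simp: eventually_sequentially)
qed

lemma has_density_Compl:
  assumes "S \<in> sets mu"
  shows "has_density (- S) x (1 - d) \<longleftrightarrow> has_density S x d"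
proof -
  have "(\<lambda>n. 1 - f n) \<longlonglongrightarrow> 1 - d \<longleftrightarrow> f \<longlonglongrightarrow> d" for f :: "nat \<Rightarrow> real"
    using tendsto_diff[OF tendsto_const[of 1], of f d sequentially]
      tendsto_diff[OF tendsto_const[of 1], of "\<lambda>n. 1 - f n" "1 - d" sequentially] by auto
  then show ?thesis
    unfolding has_density_def dens_seq_Compl[OF assms] .
qed

lemma Phi_Compl_iff: "S \<in> sets mu \<Longrightarrow> x \<in> Phi (- S) \<longleftrightarrow> has_density S x 0"
  using has_density_Compl[of S x 0] by (simp add: Phi_def)


section \<open>Approximation by finitely determined sets\<close>

definition approximable :: "(nat \<Rightarrow> bool) set \<Rightarrow> bool" where
  "approximable A \<longleftrightarrow> A \<in> sets mu \<and>
     (\<forall>e>0. \<exists>n K. fin_dep n K \<and> measure mu (sym_diff A K) < e)"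

lemma approximable_fin_dep: "fin_dep n K \<Longrightarrow> approximable K"
  unfolding approximable_def using fin_dep_sets by force

lemma approximable_Compl:
  assumes "approximable A"
  shows "approximable (- A)"
proof -
  have "sym_diff (- A) (- K) = sym_diff A K" for K
    by auto
  then show ?thesis
    using assms unfolding approximable_def by (metis fin_dep_Compl Compl_sets_mu)
qed

text \<open>Subadditivity, in the form used for triangle inequalities of symmetric differences.\<close>
lemma measure_le_cover:
  assumes "X \<subseteq> Y \<union> Z" "X \<in> sets mu" "Y \<in> sets mu" "Z \<in> sets mu"
  shows "measure mu X \<le> measure mu Y + measure mu Z"
  using assms by (intro order_trans[OF mu.finite_measure_mono measure_Un_le]) auto

lemma approximable_Un:
  assumes A: "approximable A" and B: "approximable B"
  shows "approximable (A \<union> B)"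
  unfolding approximable_def
proof (intro conjI allI impI)
  have sets: "A \<in> sets mu" "B \<in> sets mu"
    using A B by (simp_all add: approximable_def)
  then show "A \<union> B \<in> sets mu"
    by simp
  fix e :: real assume "e > 0"
  then obtain m K n L where K: "fin_dep m K" "measure mu (sym_diff A K) < e/2"
    and L: "fin_dep n L" "measure mu (sym_diff B L) < e/2"
    using A B unfolding approximable_def by (meson half_gt_zero)
  have "fin_dep (max m n) (K \<union> L)"
    using K L by (intro fin_dep_Un) (auto intro: fin_dep_mono)
  moreover have "measure mu (sym_diff (A \<union> B) (K \<union> L))
      \<le> measure mu (sym_diff A K) + measure mu (sym_diff B L)"
    using sets fin_dep_sets[OF K(1)] fin_dep_sets[OF L(1)] by (intro measure_le_cover) auto
  ultimately show "\<exists>n K. fin_dep n K \<and> measure mu (sym_diff (A \<union> B) K) < e"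
    using K(2) L(2) by (intro exI conjI) auto
qed

lemma approximable_limit:
  assumes A: "A \<in> sets mu"
    and close: "\<And>e. e > 0 \<Longrightarrow> \<exists>B. approximable B \<and> measure mu (sym_diff A B) < e"
  shows "approximable A"
  unfolding approximable_def
proof (intro conjI allI impI A)
  fix e :: real assume "e > 0"
  then obtain B where B: "approximable B" "measure mu (sym_diff A B) < e/2"
    using close half_gt_zero by blast
  then obtain n K where K: "fin_dep n K" "measure mu (sym_diff B K) < e/2"
    using \<open>e > 0\<close> unfolding approximable_def by (meson half_gt_zero)
  have "measure mu (sym_diff A K) \<le> measure mu (sym_diff A B) + measure mu (sym_diff B K)"
    using A B fin_dep_sets[OF K(1)] by (intro measure_le_cover) (auto simp: approximable_def)
  then have "measure mu (sym_diff A K) < e"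
    using B(2) K(2) by linarith
  then show "\<exists>n K. fin_dep n K \<and> measure mu (sym_diff A K) < e"
    using K(1) by blast
qed

text \<open>Countable unions: by continuity from below the finite partial unions converge in
  measure to the union.\<close>
lemma approximable_UN:
  fixes A :: "nat \<Rightarrow> (nat \<Rightarrow> bool) set"
  assumes A: "\<And>i. approximable (A i)"
  shows "approximable (\<Union>i. A i)"
proof -
  define B where "B m = (\<Union>k<m. A k)" for m
  have B: "approximable (B m)" for m
  proof (induction m)
    case 0
    show ?case
      using approximable_fin_dep[OF fin_dep_empty] by (simp add: B_def)
  next
    case (Suc m)
    have "B (Suc m) = A m \<union> B m"
      by (auto simp: B_def lessThan_Suc)
    then show ?case
      using approximable_Un[OF A Suc.IH] by simp
  qed
  have B_sets: "B m \<in> sets mu" for m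
    using B by (simp add: approximable_def)
  have U_sets: "(\<Union>i. A i) \<in> sets mu"
    using A by (auto simp: approximable_def)
  have "incseq B"
    unfolding incseq_def B_def by (intro allI impI UN_mono) auto
  moreover have "(\<Union>m. B m) = (\<Union>i. A i)"
    by (auto simp: B_def)
  ultimately have lim: "(\<lambda>m. measure mu (B m)) \<longlonglongrightarrow> measure mu (\<Union>i. A i)"
    using B_sets mu.finite_Lim_measure_incseq[of B] by auto
  show ?thesis
  proof (rule approximable_limit[OF U_sets])
    fix e :: real assume "e > 0"
    then obtain m where m: "measure mu (\<Union>i. A i) - e < measure mu (B m)"
      using order_tendstoD(1)[OF lim, of "measure mu (\<Union>i. A i) - e"]
      by (auto simp: eventually_sequentially)
    have "B m \<subseteq> (\<Union>i. A i)"
      by (auto simp: B_def)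
    then have "sym_diff (\<Union>i. A i) (B m) = (\<Union>i. A i) - B m"
      by blast
    also have "measure mu \<dots> = measure mu (\<Union>i. A i) - measure mu (B m)"
      using U_sets B_sets \<open>B m \<subseteq> _\<close> by (intro mu.finite_measure_Diff) auto
    finally have "measure mu (sym_diff (\<Union>i. A i) (B m)) < e"
      using m by linarith
    then show "\<exists>B. approximable B \<and> measure mu (sym_diff (\<Union>i. A i) B) < e"
      using B by blast
  qed
qed

text \<open>Sets of the product sigma-algebra are approximable, by induction over the
  generating coordinate events.\<close>
lemma approximable_coin_base:
  assumes "A \<in> sets coin_base"
  shows "approximable A"
proof -
  have "(\<Pi>\<^sub>E i\<in>(UNIV :: nat set). space (measure_pmf (bernoulli_pmf (1/2)))) = UNIV"
    by (auto simp: PiE_def extensional_def)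
  then have "A \<in> sigma_sets UNIV {{f. f i \<in> B} | i B. True}"
    using assms unfolding coin_base_def sets_PiM_single by simp
  then show ?thesis
  proof induct
    case (Basic a)
    then obtain i B where "a = {f. f i \<in> B}"
      by auto
    then have "fin_dep (Suc i) a"
      by (auto simp: fin_dep_def)
    then show ?case
      by (rule approximable_fin_dep)
  next
    case Empty
    show ?case
      by (rule approximable_fin_dep[OF fin_dep_empty])
  next
    case (Compl a)
    then show ?case
      using approximable_Compl by (simp add: Compl_eq_Diff_UNIV)
  next
    case (Union A)
    then show ?case
      using approximable_UN[of A] by blast
  qed
qed

text \<open>Every measurable set is approximable: it differs from a set of the product sigma-algebra
  by a null set.\<close>
lemma approximable_mu:
  assumes A: "A \<in> sets mu"
  shows "approximable A"
proof (rule approximable_limit[OF A])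
  obtain C D N where C: "A = C \<union> D" "D \<subseteq> N" "N \<in> null_sets coin_base" "C \<in> sets coin_base"
    using A unfolding mu_def by (rule sets_completionE)
  have "sym_diff A C \<in> null_sets mu"
    unfolding mu_def null_sets_completion_iff2 using C by blast
  then have "measure mu (sym_diff A C) = 0"
    by (rule measure_eq_0_null_sets)
  then show "\<exists>B. approximable B \<and> measure mu (sym_diff A B) < e" if "e > 0" for e
    using approximable_coin_base[OF C(4)] that by auto
qed


section \<open>The Lebesgue density theorem\<close>

lemma measure_ge_on_fin_dep:
  assumes S: "S \<in> sets mu" and G: "fin_dep n G"
    and dens: "\<And>x. x \<in> G \<Longrightarrow> d \<le> dens_seq S x n"
  shows "d * measure mu G \<le> measure mu (S \<inter> G)"
proof -
  define C where "C = (\<lambda>x. cyl x n) ` G"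
  have G_eq: "G = (\<Union>c\<in>C. c)"
    unfolding C_def using fin_dep_eq_Union_cyl[OF G] by simp
  have sum: "measure mu (T \<inter> G) = (\<Sum>c\<in>C. measure mu (T \<inter> c))" if T: "T \<in> sets mu" for T
  proof -
    have "T \<inter> G = (\<Union>c\<in>C. T \<inter> c)"
      unfolding G_eq by auto
    also have "measure mu \<dots> = (\<Sum>c\<in>C. measure mu (T \<inter> c))"
    proof (rule measure_finite_Union)
      show "disjoint_family_on (\<lambda>c. T \<inter> c) C"
        unfolding disjoint_family_on_def C_def using cyl_disjoint by blast
    qed (use finite_cyls T in \<open>auto simp: C_def mu.emeasure_finite\<close>)
    finally show ?thesis .
  qed
  have "d * measure mu c \<le> measure mu (S \<inter> c)" if "c \<in> C" for c
    using that dens dens_seq_ge_iff by (auto simp: C_def)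
  then have "d * (\<Sum>c\<in>C. measure mu (UNIV \<inter> c)) \<le> (\<Sum>c\<in>C. measure mu (S \<inter> c))"
    by (simp add: sum_distrib_left sum_mono)
  then show ?thesis
    using sum[OF sets.top] sum[OF S] by simp
qed

lemma measure_ge_on_disjoint_UN:
  fixes G :: "nat \<Rightarrow> (nat \<Rightarrow> bool) set"
  assumes ineq: "\<And>n. d * measure mu (G n) \<le> measure mu (S \<inter> G n)"
    and S: "S \<in> sets mu" and G: "\<And>n. G n \<in> sets mu" and disj: "disjoint_family G"
  shows "d * measure mu (\<Union>n. G n) \<le> measure mu (S \<inter> (\<Union>n. G n))"
proof -
  have "(\<lambda>n. measure mu (G n)) sums measure mu (\<Union>n. G n)"
    using G disj by (intro measure_UNION) (auto simp: mu.emeasure_finite)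
  then have sum_G: "(\<lambda>n. d * measure mu (G n)) sums (d * measure mu (\<Union>n. G n))"
    by (rule sums_mult)
  have sum_SG: "(\<lambda>n. measure mu (S \<inter> G n)) sums measure mu (\<Union>n. S \<inter> G n)"
    using G disj S by (intro measure_UNION) (auto simp: mu.emeasure_finite disjoint_family_on_def)
  have "d * measure mu (\<Union>n. G n) \<le> measure mu (\<Union>n. S \<inter> G n)"
    using ineq sum_G sum_SG by (rule sums_le)
  then show ?thesis
    by simp
qed

text \<open>If every point of E outside the clopen set K has a cylinder of
  length at least N in which S has relative density at least d, then the first such cylinders
  form a measurable set W, disjoint from K, covering E - K, on which S has density at least d.\<close>
lemma stopping_time_cover:
  assumes S: "S \<in> sets mu" and K: "fin_dep N K"
    and hyp: "\<And>x. x \<in> E \<Longrightarrow> x \<notin> K \<Longrightarrow> \<exists>n\<ge>N. d \<le> dens_seq S x n"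
  obtains W where "W \<in> sets mu" "E - K \<subseteq> W" "W \<inter> K = {}"
    "d * measure mu W \<le> measure mu (S \<inter> W)"
proof
  define good where "good x n \<longleftrightarrow> N \<le> n \<and> d \<le> dens_seq S x n" for x n
  define G where "G n = {x. x \<notin> K \<and> good x n \<and> (\<forall>m<n. \<not> good x m)}" for n
  have G_fin_dep: "fin_dep n (G n)" for n
  proof (cases "N \<le> n")
    case True
    show ?thesis
    proof (unfold fin_dep_def, intro allI impI)
      fix x y :: "nat \<Rightarrow> bool"
      assume xy: "\<forall>i<n. x i = y i"
      have "x \<in> K \<longleftrightarrow> y \<in> K"
        using fin_dep_mono[OF K True] xy unfolding fin_dep_def by blast
      moreover have "good x m \<longleftrightarrow> good y m" if "m \<le> n" for m
        using that xy dens_seq_cong[of m x y S] unfolding good_def by auto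
      ultimately show "x \<in> G n \<longleftrightarrow> y \<in> G n"
        unfolding G_def by auto
    qed
  qed (auto simp: G_def good_def fin_dep_def)
  have G_sets: "G n \<in> sets mu" for n
    by (rule fin_dep_sets[OF G_fin_dep])
  have G_disj: "disjoint_family G"
  proof (unfold disjoint_family_on_def, intro ballI impI)
    fix m n :: nat
    assume "m \<noteq> n"
    then have "m < n \<or> n < m"
      by arith
    then show "G m \<inter> G n = {}"
      unfolding G_def by blast
  qed
  show "(\<Union>n. G n) \<in> sets mu"
    using G_sets by auto
  show "(\<Union>n. G n) \<inter> K = {}"
    by (auto simp: G_def)
  show "E - K \<subseteq> (\<Union>n. G n)"
  proof
    fix x assume x: "x \<in> E - K"
    then have "\<exists>n. good x n"
      using hyp unfolding good_def by blast
    then have "x \<in> G (LEAST n. good x n)"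
      using x unfolding G_def by (auto intro: LeastI_ex dest: not_less_Least)
    then show "x \<in> (\<Union>n. G n)"
      by blast
  qed
  have "d * measure mu (G n) \<le> measure mu (S \<inter> G n)" for n
    using S G_fin_dep by (rule measure_ge_on_fin_dep) (auto simp: G_def good_def)
  then show "d * measure mu (\<Union>n. G n) \<le> measure mu (S \<inter> (\<Union>n. G n))"
    using S G_sets G_disj by (rule measure_ge_on_disjoint_UN)
qed

text \<open>Sets covered by measurable sets of arbitrarily small measure are null (mu is complete).\<close>
lemma null_if_small_covers:
  assumes "\<And>e. e > 0 \<Longrightarrow> \<exists>W\<in>sets mu. E \<subseteq> W \<and> measure mu W < e"
  shows "E \<in> null_sets mu"
proof -
  have "\<forall>j. \<exists>W\<in>sets mu. E \<subseteq> W \<and> measure mu W < inverse (real (Suc j))"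
    using assms by simp
  then obtain W where W: "\<And>j. W j \<in> sets mu" "\<And>j. E \<subseteq> W j"
      "\<And>j. measure mu (W j) < inverse (real (Suc j))"
    by metis
  define V where "V = (\<Inter>j. W j)"
  have V: "V \<in> sets mu"
    unfolding V_def using W(1) by auto
  have "measure mu V \<le> measure mu (W j)" for j
    unfolding V_def using W(1) by (intro mu.finite_measure_mono) auto
  then have "measure mu V \<le> inverse (real (Suc j))" for j
    using W(3)[of j] by (meson less_imp_le order_trans)
  then have "measure mu V \<le> 0"
    by (intro LIMSEQ_le_const[OF LIMSEQ_inverse_real_of_nat]) auto
  then have "V \<in> null_sets mu"
    using V by (simp add: mu.emeasure_eq_measure null_sets_def measure_nonneg antisym)
  moreover have "E \<subseteq> V"
    unfolding V_def using W(2) by auto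
  ultimately show ?thesis
    unfolding mu_def using null_sets_completion_subset by blast
qed

lemma density_null_set:
  assumes S: "S \<in> sets mu" and d: "d > 0" and E: "E \<subseteq> - S"
    and hyp: "\<And>x. x \<in> E \<Longrightarrow> frequently (\<lambda>n. d \<le> dens_seq S x n) sequentially"
  shows "E \<in> null_sets mu"
proof (rule null_if_small_covers)
  fix e :: real assume e: "e > 0"
  define eps where "eps = min (d * (e / 2)) (e / 2)"
  have "eps > 0"
    using e d by (simp add: eps_def)
  then obtain N K where K: "fin_dep N K" "measure mu (sym_diff S K) < eps"
    using approximable_mu[OF S] unfolding approximable_def by blast
  have K_sets: "K \<in> sets mu"
    by (rule fin_dep_sets[OF K(1)])
  have "measure mu (S - K) \<le> measure mu (sym_diff S K)" "measure mu (K - S) \<le> measure mu (sym_diff S K)"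
    using S K_sets by (intro mu.finite_measure_mono; auto)+
  then have SK: "measure mu (S - K) < d * (e / 2)" and KS: "measure mu (K - S) < e / 2"
    using K(2) by (auto simp: eps_def)
  obtain W where W: "W \<in> sets mu" "E - K \<subseteq> W" "W \<inter> K = {}"
      "d * measure mu W \<le> measure mu (S \<inter> W)"
    using stopping_time_cover[OF S K(1), of E d] hyp unfolding frequently_sequentially by blast
  have "measure mu (S \<inter> W) \<le> measure mu (S - K)"
    using W S K_sets by (intro mu.finite_measure_mono) auto
  then have "d * measure mu W < d * (e / 2)"
    using W(4) SK by linarith
  then have "measure mu W < e / 2"
    using d by simp
  moreover have "measure mu (W \<union> (K - S)) \<le> measure mu W + measure mu (K - S)"
    using W S K_sets by (intro measure_Un_le) auto
  moreover have "E \<subseteq> W \<union> (K - S)"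
    using W(2) E by auto
  ultimately show "\<exists>W\<in>sets mu. E \<subseteq> W \<and> measure mu W < e"
    using KS W S K_sets by (intro bexI[of _ "W \<union> (K - S)"]) auto
qed

lemma Phi_diff_null:
  assumes C: "C \<in> sets mu"
  shows "Phi C - C \<in> null_sets mu"
proof (rule density_null_set[OF C, of "1/2"])
  fix x assume "x \<in> Phi C - C"
  then have "dens_seq C x \<longlonglongrightarrow> 1"
    by (simp add: Phi_def has_density_def)
  then have "eventually (\<lambda>n. 1/2 < dens_seq C x n) sequentially"
    by (rule order_tendstoD) simp
  then have "eventually (\<lambda>n. 1/2 \<le> dens_seq C x n) sequentially"
    by (rule eventually_mono) simp
  then show "frequently (\<lambda>n. 1/2 \<le> dens_seq C x n) sequentially"
    by (rule eventually_frequently[OF sequentially_bot])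
qed auto

lemma diff_Phi_null:
  assumes C: "C \<in> sets mu"
  shows "C - Phi C \<in> null_sets mu"
proof -
  define E where "E k = {x \<in> C. frequently (\<lambda>n. inverse (real (Suc k)) \<le> dens_seq (- C) x n) sequentially}" for k
  have "E k \<in> null_sets mu" for k
    using C by (intro density_null_set[of "- C"]) (auto simp: E_def Compl_sets_mu)
  then have null: "(\<Union>k. E k) \<in> null_sets mu"
    by (rule null_sets_UN)
  have "C - Phi C \<subseteq> (\<Union>k. E k)"
  proof
    fix x assume x: "x \<in> C - Phi C"
    then have "\<not> dens_seq C x \<longlonglongrightarrow> 1"
      by (simp add: Phi_def has_density_def)
    then obtain r where r: "r > 0" "frequently (\<lambda>n. \<not> dist (dens_seq C x n) 1 < r) sequentially"
      by (auto simp: tendsto_iff not_eventually)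
    obtain k where k: "inverse (real (Suc k)) < r"
      using reals_Archimedean[OF r(1)] by auto
    have dist: "dist (dens_seq C x n) 1 = dens_seq (- C) x n" for n
      using dens_seq_le_1[of C x n] dens_seq_Compl[OF C] by (simp add: dist_real_def)
    have "frequently (\<lambda>n. inverse (real (Suc k)) \<le> dens_seq (- C) x n) sequentially"
      using r(2) by (rule frequently_elim1) (use dist k in auto)
    then have "x \<in> E k"
      using x unfolding E_def by blast
    then show "x \<in> (\<Union>k. E k)"
      by blast
  qed
  then show ?thesis
    using null unfolding mu_def by (rule null_sets_completion_subset)
qed

lemma Phi_sets: "C \<in> sets mu \<Longrightarrow> Phi C \<in> sets mu"
proof -
  assume C: "C \<in> sets mu"
  have "Phi C = (C - (C - Phi C)) \<union> (Phi C - C)"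
    by auto
  then show ?thesis
    using C null_setsD2[OF Phi_diff_null[OF C]] null_setsD2[OF diff_Phi_null[OF C]]
    by (metis sets.Diff sets.Un)
qed

text \<open>Phi C agrees with C up to a null set, hence has the same density sequences.\<close>
lemma dens_seq_Phi: "C \<in> sets mu \<Longrightarrow> dens_seq (Phi C) = dens_seq C"
  using Phi_diff_null diff_Phi_null Phi_sets by (intro dens_seq_null_cong) auto

lemma Phi_idem:
  assumes "C \<in> sets mu"
  shows "Phi (Phi C) = Phi C"
  unfolding Phi_def[of "Phi C"] has_density_def dens_seq_Phi[OF assms]
  by (simp add: Phi_def has_density_def)


section \<open>Characterisation of the T-clopen sets\<close>

lemma T_clopen_imp_dualistic: "T_clopen A \<Longrightarrow> dualistic A"
  unfolding T_clopen_def dualistic_def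
  by (metis ComplI Phi_Compl_iff Phi_def insertCI mem_Collect_eq)

lemma dualistic_Phi: "dualistic B \<Longrightarrow> dualistic (Phi B)"
  by (simp add: dualistic_def has_density_def dens_seq_Phi Phi_sets)

lemma dualistic_density_0_iff: "dualistic B \<Longrightarrow> has_density B x 0 \<longleftrightarrow> x \<notin> Phi B"
  unfolding dualistic_def Phi_def has_density_def by (metis LIMSEQ_unique insert_iff singletonD mem_Collect_eq zero_neq_one)

lemma T_clopen_Phi: "dualistic B \<Longrightarrow> T_clopen (Phi B)"
proof -
  assume D: "dualistic B"
  then have B: "B \<in> sets mu"
    by (simp add: dualistic_def)
  have "x \<in> Phi (- Phi B) \<longleftrightarrow> x \<notin> Phi B" for x
    using Phi_Compl_iff[OF Phi_sets[OF B]] dualistic_density_0_iff[OF D]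
    by (simp add: has_density_def dens_seq_Phi[OF B])
  then show ?thesis
    unfolding T_clopen_def using Phi_sets[OF B] Phi_idem[OF B] by auto
qed

lemma ran_Phi_fixed: "A \<in> ran_Phi \<Longrightarrow> Phi A = A"
  unfolding ran_Phi_def using Phi_idem by auto

lemma T_clopen_ran_Phi: "T_clopen A \<Longrightarrow> A \<in> ran_Phi"
  unfolding T_clopen_def ran_Phi_def by force

lemma T_clopen_iff_Phi_dualistic: "T_clopen A \<longleftrightarrow> (\<exists>B. dualistic B \<and> A = Phi B)"
  using T_clopen_imp_dualistic T_clopen_Phi by (metis T_clopen_def)

lemma Phi_dualistic_iff: "(\<exists>B. dualistic B \<and> A = Phi B) \<longleftrightarrow> A \<in> ran_Phi \<and> dualistic A"
  using dualistic_Phi T_clopen_Phi T_clopen_ran_Phi ran_Phi_fixed by metis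


section \<open>T-clopen sets are Delta^0_2\<close>

lemma fsigma_UN_closed:
  fixes F :: "nat \<Rightarrow> (nat \<Rightarrow> bool) set"
  assumes "\<And>k. closed (F k)"
  shows "fsigma_in euclidean (\<Union>k. F k)"
proof (rule fsigma_in_Union)
  fix S assume "S \<in> range F"
  then have "closed S"
    using assms by auto
  then show "fsigma_in euclidean S"
    by (rule closed_imp_fsigma_in[OF closed_closedin[THEN iffD1]])
qed simp

text \<open>Any condition that eventually holds along the density sequence defines an F_sigma
  set, since each term of the sequence depends on finitely many coordinates.\<close>
lemma fsigma_eventually_dens_seq:
  "fsigma_in euclidean {x. eventually (\<lambda>n. P (dens_seq A x n)) sequentially}"
proof -
  have "{x. eventually (\<lambda>n. P (dens_seq A x n)) sequentially}
      = (\<Union>N. \<Inter>n\<in>{N..}. {x. P (dens_seq A x n)})"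
    by (auto simp: eventually_sequentially)
  moreover have "closed (\<Inter>n\<in>{N..}. {x. P (dens_seq A x n)})" for N
    by (intro closed_INT ballI fin_dep_closed[OF fin_dep_dens_seq])
  ultimately show ?thesis
    by (simp add: fsigma_UN_closed)
qed

lemma Delta02_if_fsigma_Compl:
  "fsigma_in euclidean A \<Longrightarrow> fsigma_in euclidean (- A) \<Longrightarrow> Delta02 A"
  by (simp add: Delta02_def gdelta_in_fsigma_in Compl_eq_Diff_UNIV)

text \<open>A T-clopen set is where its density is eventually above 1/2, and its complement is
  where the density is eventually below 1/2.\<close>
lemma T_clopen_Delta02:
  assumes T: "T_clopen A"
  shows "Delta02 A"
proof -
  have A: "A \<in> sets mu" "Phi A = A" "Phi (- A) = - A"
    using T by (auto simp: T_clopen_def)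
  have lim1: "dens_seq A x \<longlonglongrightarrow> 1" if "x \<in> A" for x
    using A(2) that by (auto simp: Phi_def has_density_def)
  have lim0: "dens_seq A x \<longlonglongrightarrow> 0" if "x \<notin> A" for x
    using A(3) Phi_Compl_iff[OF A(1)] that by (auto simp: has_density_def)
  let ?hi = "{x. eventually (\<lambda>n. 1/2 < dens_seq A x n) sequentially}"
  let ?lo = "{x. eventually (\<lambda>n. dens_seq A x n < 1/2) sequentially}"
  have "?hi \<inter> ?lo = {}"
  proof (rule ccontr)
    assume "?hi \<inter> ?lo \<noteq> {}"
    then obtain x where "x \<in> ?hi" "x \<in> ?lo"
      by blast
    then have "eventually (\<lambda>n. 1/2 < dens_seq A x n \<and> dens_seq A x n < 1/2) sequentially"
      by (simp add: eventually_conj)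
    then have "eventually (\<lambda>n. False) sequentially"
      by (rule eventually_mono) linarith
    then show False
      by simp
  qed
  moreover have "x \<in> ?hi" if "x \<in> A" for x
    using order_tendstoD(1)[OF lim1[OF that], of "1/2"] by simp
  moreover have "x \<in> ?lo" if "x \<notin> A" for x
    using order_tendstoD(2)[OF lim0[OF that], of "1/2"] by simp
  ultimately have hi: "A = ?hi" and lo: "- A = ?lo"
    by blast+
  have "fsigma_in euclidean A"
    by (subst hi) (rule fsigma_eventually_dens_seq)
  moreover have "fsigma_in euclidean (- A)"
    by (subst lo) (rule fsigma_eventually_dens_seq)
  ultimately show ?thesis
    by (rule Delta02_if_fsigma_Compl)
qed


section \<open>A fixed point of Phi in Delta^0_2 that is not T-clopen\<close>

definition zeros :: "nat \<Rightarrow> bool" where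
  "zeros = (\<lambda>_. False)"

definition block :: "nat \<Rightarrow> bool \<Rightarrow> (nat \<Rightarrow> bool) set" where
  "block k b = {y. (\<forall>i<k. \<not> y i) \<and> y k \<and> y (Suc k) = b}"

definition B0 :: "(nat \<Rightarrow> bool) set" where
  "B0 = (\<Union>k. block k False)"

lemma block_eq_cyl: "block k b = cyl (zeros(k := True, Suc k := b)) (Suc (Suc k))"
  unfolding block_def cyl_def zeros_def by (auto simp: less_Suc_eq)

lemma block_fin_dep: "fin_dep (Suc (Suc k)) (block k b)"
  unfolding block_eq_cyl by (rule fin_dep_cyl)

lemma block_measure: "measure mu (block k b) = 1/4 * (1/2) ^ k"
  unfolding block_eq_cyl cyl_measure by simp

lemma block_subset_cyl_zeros: "block n b \<subseteq> cyl zeros n"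
  by (auto simp: block_def cyl_def zeros_def)

lemma block_disjoint:
  assumes "y \<in> block k b" "y \<in> block j c"
  shows "k = j \<and> b = c"
proof -
  have "k = j"
  proof (rule ccontr)
    assume "k \<noteq> j"
    then have "k < j \<or> j < k"
      by arith
    then show False
      using assms unfolding block_def by auto
  qed
  then show ?thesis
    using assms unfolding block_def by auto
qed

lemma block_cover: "x \<noteq> zeros \<Longrightarrow> \<exists>k. x \<in> block k (x (Suc k))"
proof -
  assume "x \<noteq> zeros"
  then have ex: "\<exists>i. x i"
    by (auto simp: zeros_def)
  define k where "k = (LEAST i. x i)"
  have "x k"
    unfolding k_def using ex by (rule LeastI_ex)
  moreover have "\<forall>i<k. \<not> x i"
    unfolding k_def using not_less_Least by blast
  ultimately have "x \<in> block k (x (Suc k))"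
    by (simp add: block_def)
  then show ?thesis
    by blast
qed

lemma B0_sets: "B0 \<in> sets mu"
  unfolding B0_def using fin_dep_sets[OF block_fin_dep] by auto

lemma B0_Delta02: "Delta02 B0"
proof -
  have "open B0"
    unfolding B0_def using fin_dep_open[OF block_fin_dep] by auto
  then have "gdelta_in euclidean B0"
    by (rule open_imp_gdelta_in[OF open_openin[THEN iffD1]])
  moreover have "fsigma_in euclidean B0"
    unfolding B0_def by (rule fsigma_UN_closed[OF fin_dep_closed[OF block_fin_dep]])
  ultimately show ?thesis
    by (simp add: Delta02_def)
qed

text \<open>At the zero sequence B0 has relative density in [1/4, 3/4] on every cylinder:
  it contains the quarter 0^n 1 0 and misses the quarter 0^n 1 1.\<close>
lemma dens_seq_B0_zeros: "1/4 \<le> dens_seq B0 zeros n \<and> dens_seq B0 zeros n \<le> 3/4"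
proof -
  have sets: "block n b \<in> sets mu" for b
    by (rule fin_dep_sets[OF block_fin_dep])
  have "block n False \<subseteq> B0 \<inter> cyl zeros n"
    using block_subset_cyl_zeros by (auto simp: B0_def)
  then have lower: "measure mu (block n False) \<le> measure mu (B0 \<inter> cyl zeros n)"
    using sets B0_sets by (intro mu.finite_measure_mono) auto
  have "B0 \<inter> cyl zeros n \<subseteq> cyl zeros n - block n True"
    by (auto simp: B0_def dest: block_disjoint)
  then have "measure mu (B0 \<inter> cyl zeros n) \<le> measure mu (cyl zeros n - block n True)"
    using sets by (intro mu.finite_measure_mono) auto
  also have "\<dots> = measure mu (cyl zeros n) - measure mu (block n True)"
    using sets block_subset_cyl_zeros by (intro mu.finite_measure_Diff) auto
  finally show ?thesis
    using lower unfolding dens_seq_def block_measure cyl_measure by (simp add: field_simps)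
qed

lemma zeros_notin_B0: "zeros \<notin> B0"
  by (auto simp: B0_def block_def zeros_def)

lemma Phi_B0: "Phi B0 = B0"
proof (intro set_eqI iffI)
  fix x assume "x \<in> B0"
  then obtain k where k: "x \<in> block k False"
    by (auto simp: B0_def)
  have "block k False \<subseteq> B0"
    by (auto simp: B0_def)
  then have "has_density B0 x 1"
    by (rule has_density_fin_dep_subset[OF block_fin_dep k])
  then show "x \<in> Phi B0"
    by (simp add: Phi_def)
next
  fix x assume "x \<in> Phi B0"
  then have lim: "dens_seq B0 x \<longlonglongrightarrow> 1"
    by (simp add: Phi_def has_density_def)
  show "x \<in> B0"
  proof (rule ccontr)
    assume notin: "x \<notin> B0"
    have "x \<noteq> zeros"
    proof
      assume "x = zeros"
      then have "dens_seq B0 zeros \<longlonglongrightarrow> 1"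
        using lim by simp
      then have "1 \<le> (3/4 :: real)"
        by (rule LIMSEQ_le_const2) (use dens_seq_B0_zeros in auto)
      then show False
        by simp
    qed
    then obtain k where "x \<in> block k (x (Suc k))"
      using block_cover by blast
    then have "x \<in> block k True"
      using notin by (cases "x (Suc k)") (auto simp: B0_def)
    moreover have "block k True \<inter> B0 = {}"
      by (auto simp: B0_def dest: block_disjoint)
    ultimately have "dens_seq B0 x \<longlonglongrightarrow> 0"
      using has_density_fin_dep_disjoint[OF block_fin_dep] by (simp add: has_density_def)
    then have "(1 :: real) = 0"
      by (rule LIMSEQ_unique[OF lim])
    then show False
      by simp
  qed
qed

lemma B0_not_T_clopen: "\<not> T_clopen B0"
proof
  assume "T_clopen B0"
  then have "zeros \<in> Phi (- B0)"
    using zeros_notin_B0 by (auto simp: T_clopen_def)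
  then have "dens_seq B0 zeros \<longlonglongrightarrow> 0"
    using Phi_Compl_iff[OF B0_sets] by (simp add: has_density_def)
  then show False
    using dens_seq_B0_zeros LIMSEQ_le_const[of "dens_seq B0 zeros" 0 "1/4"] by auto
qed


theorem corollary5p4:
  shows "(\<forall>A. (T_clopen A \<longleftrightarrow> (\<exists>B. dualistic B \<and> A = Phi B))
            \<and> ((\<exists>B. dualistic B \<and> A = Phi B) \<longleftrightarrow> (A \<in> ran_Phi \<and> dualistic A)))
         \<and> {A. T_clopen A} \<subset> ran_Phi \<inter> {A. Delta02 A}"
proof (intro conjI allI psubsetI)
  fix A
  show "T_clopen A \<longleftrightarrow> (\<exists>B. dualistic B \<and> A = Phi B)"
    by (rule T_clopen_iff_Phi_dualistic)
  show "(\<exists>B. dualistic B \<and> A = Phi B) \<longleftrightarrow> (A \<in> ran_Phi \<and> dualistic A)"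
    by (rule Phi_dualistic_iff)
next
  show "{A. T_clopen A} \<subseteq> ran_Phi \<inter> {A. Delta02 A}"
    using T_clopen_ran_Phi T_clopen_Delta02 by blast
next
  have "B0 \<in> ran_Phi \<inter> {A. Delta02 A}"
    using Phi_B0 B0_sets B0_Delta02 unfolding ran_Phi_def by force
  then show "{A. T_clopen A} \<noteq> ran_Phi \<inter> {A. Delta02 A}"
    using B0_not_T_clopen by blast
qed

end
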